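(* Let $U_0$ be the $T_G$-ideal of $F\langle X|G\rangle$ generated by the polynomials: $x_{e}^{(1)}x_{e}^{(2)}-x_{e}^{(2)}x_{e}^{(1)}$ if $e\in G_0$; $x_{g}^{(1)}x_{g^{-1}}^{(2)}x_{g}^{(3)}-x_{g}^{(3)}x_{g^{-1}}^{(2)}x_{g}^{(1)}$ for $g\neq e$ with $B_g\neq0$; and $x_g^{(1)}$ for $g$ with $B_g=0$. If $m(x_{h_1}^{(1)},\dots,x_{h_p}^{(p)})$ and $n(x_{h_1}^{(1)},\dots,x_{h_p}^{(p)})$ are two monomials in $F\langle X|G\rangle$ such that the matrices $m(\xi_{h_1}^{(1)},\dots,\xi_{h_p}^{(p)})$ and $n(\xi_{h_1}^{(1)},\dots,\xi_{h_p}^{(p)})$ have, in the same position, the same nonzero entry, then $m\equiv n$ modulo $U_0$.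
   Context: Let $F$ be an infinite field, $G$ a group with identity $e$, $(g_1,\dots,g_n)\in G^n$ with pairwise distinct entries; $M_n(F)$ has the elementary grading in which the component of degree $g$ is spanned by the matrix units $e_{ij}$ with $g_i^{-1}g_j=g$. $B$ is a subalgebra of $M_n(F)$ spanned by a set of matrix units, $B_g=B\cap M_n(F)_g$, $G_0=\{g:B_g\neq0\}$. $F\langle X|G\rangle$ is the free associative algebra on variables $x_g^{(i)}$ ($g\in G$, $i\ge1$) of degree $g$; a $T_G$-ideal is an ideal invariant under degree-preserving endomorphisms. For $g\in G_0$, $D_{\widehat g}$ is the set of $i$ with $e_{ij}\in B_g$ for some (necessarily unique) $j=:\widehat g(i)$. With $\Omega=F[\xi_{ij}^{(k)}]$ the commutative polynomial ring, the generic element is $\xi_g^{(k)}=\sum_{i\in D_{\widehat g}}\xi^{(k)}_{i\widehat g(i)}e_{i\widehat g(i)}\in M_n(\Omega)$ for $g\in G_0$ (and $\xi_g^{(k)}=0$ if $g\notin G_0$). *)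

theory Defs
  imports Main "HOL-Library.Poly_Mapping"
begin

text \<open>
  The group G is a type of class group_add (written additively,
  NOT assumed commutative): e = 0, g^{-1} = -g, g h = g + h.
  Matrix indices are 0,...,n-1.  The tuple (g_1,...,g_n) is a function gs on
  {0..<n}.  The subalgebra B spanned by matrix units is given by the set
  S of index pairs (i,j) with e_ij in B.
\<close>

text \<open>Variables x_g^(i) are pairs (g,i).  A polynomial is a coefficient function
  on words (lists of variables) with finite support.  F<X|G> is taken
  non-unital: its elements have zero constant term.\<close>

type_synonym ('g, 'a) fpoly = "('g \<times> nat) list \<Rightarrow> 'a"

definition fsupp :: "('g, 'a::zero) fpoly \<Rightarrow> ('g \<times> nat) list set" where
  "fsupp p = {w. p w \<noteq> 0}"

definition free_alg :: "('g, 'a::zero) fpoly set" where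
  "free_alg = {p. finite (fsupp p) \<and> p [] = 0}"

definition fmon :: "('g \<times> nat) list \<Rightarrow> ('g, 'a::{zero,one}) fpoly" where
  "fmon w = (\<lambda>u. if u = w then 1 else 0)"

definition fadd :: "('g, 'a::plus) fpoly \<Rightarrow> ('g, 'a) fpoly \<Rightarrow> ('g, 'a) fpoly" where
  "fadd p q = (\<lambda>w. p w + q w)"

definition fdiff :: "('g, 'a::minus) fpoly \<Rightarrow> ('g, 'a) fpoly \<Rightarrow> ('g, 'a) fpoly" where
  "fdiff p q = (\<lambda>w. p w - q w)"

definition fsmult :: "'a::times \<Rightarrow> ('g, 'a) fpoly \<Rightarrow> ('g, 'a) fpoly" where
  "fsmult c p = (\<lambda>w. c * p w)"

definition fmul :: "('g, 'a::comm_semiring_1) fpoly \<Rightarrow> ('g, 'a) fpoly \<Rightarrow> ('g, 'a) fpoly" where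
  "fmul p q = (\<lambda>w. \<Sum>k\<le>length w. p (take k w) * q (drop k w))"

definition fprod :: "('g, 'a::comm_semiring_1) fpoly list \<Rightarrow> ('g, 'a) fpoly" where
  "fprod ps = foldr fmul ps (fmon [])"

definition wdeg :: "('g::group_add \<times> nat) list \<Rightarrow> 'g" where
  "wdeg w = sum_list (map fst w)"

definition homogeneous :: "'g::group_add \<Rightarrow> ('g, 'a::zero) fpoly \<Rightarrow> bool" where
  "homogeneous g p \<longleftrightarrow> (\<forall>w. p w \<noteq> 0 \<longrightarrow> wdeg w = g)"

text \<open>Degree-preserving endomorphisms of F<X|G> are exactly the substitutions
  x_g^(i) |-> sigma(g,i) with sigma(g,i) an element of F<X|G> of degree g.\<close>
definition graded_subst :: "('g::group_add \<times> nat \<Rightarrow> ('g, 'a::zero) fpoly) \<Rightarrow> bool" where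
  "graded_subst \<sigma> \<longleftrightarrow> (\<forall>v. \<sigma> v \<in> free_alg \<and> homogeneous (fst v) (\<sigma> v))"

definition subst :: "('g \<times> nat \<Rightarrow> ('g, 'a::comm_semiring_1) fpoly) \<Rightarrow> ('g, 'a) fpoly \<Rightarrow> ('g, 'a) fpoly" where
  "subst \<sigma> p = (\<lambda>u. \<Sum>w\<in>fsupp p. p w * fprod (map \<sigma> w) u)"

definition is_ideal :: "('g, 'a::comm_ring_1) fpoly set \<Rightarrow> bool" where
  "is_ideal I \<longleftrightarrow> I \<subseteq> free_alg \<and> (\<lambda>_. 0) \<in> I
     \<and> (\<forall>p\<in>I. \<forall>q\<in>I. fadd p q \<in> I)
     \<and> (\<forall>c. \<forall>p\<in>I. fsmult c p \<in> I)
     \<and> (\<forall>a\<in>free_alg. \<forall>p\<in>I. fmul a p \<in> I \<and> fmul p a \<in> I)"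

definition is_TG_ideal :: "('g::group_add, 'a::comm_ring_1) fpoly set \<Rightarrow> bool" where
  "is_TG_ideal I \<longleftrightarrow> is_ideal I \<and> (\<forall>\<sigma>. graded_subst \<sigma> \<longrightarrow> (\<forall>p\<in>I. subst \<sigma> p \<in> I))"

definition TG_ideal_gen :: "('g::group_add, 'a::comm_ring_1) fpoly set \<Rightarrow> ('g, 'a) fpoly set" where
  "TG_ideal_gen T = \<Inter>{I. is_TG_ideal I \<and> T \<subseteq> I}"

text \<open>B_g is spanned by the matrix units e_ij in B with g_i^{-1} g_j = g.\<close>
definition Bg :: "(nat \<Rightarrow> 'g::group_add) \<Rightarrow> (nat \<times> nat) set \<Rightarrow> 'g \<Rightarrow> (nat \<times> nat) set" where
  "Bg gs S g = {(i,j) \<in> S. - gs i + gs j = g}"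

definition G0 :: "(nat \<Rightarrow> 'g::group_add) \<Rightarrow> (nat \<times> nat) set \<Rightarrow> 'g set" where
  "G0 gs S = {g. Bg gs S g \<noteq> {}}"

definition U0_gens :: "(nat \<Rightarrow> 'g::group_add) \<Rightarrow> (nat \<times> nat) set \<Rightarrow> ('g, 'a::comm_ring_1) fpoly set" where
  "U0_gens gs S =
     {fdiff (fmon [(0,1),(0,2)]) (fmon [(0,2),(0,1)]) | _::unit. 0 \<in> G0 gs S}
   \<union> {fdiff (fmon [(g,1),(-g,2),(g,3)]) (fmon [(g,3),(-g,2),(g,1)]) | g. g \<noteq> 0 \<and> g \<in> G0 gs S}
   \<union> {fmon [(g,1)] | g. g \<notin> G0 gs S}"

definition U0 :: "(nat \<Rightarrow> 'g::group_add) \<Rightarrow> (nat \<times> nat) set \<Rightarrow> ('g, 'a::comm_ring_1) fpoly set" where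
  "U0 gs S = TG_ideal_gen (U0_gens gs S)"

text \<open>Omega = F[xi_ij^(k)], commutative polynomials: finitely supported maps from
  monomials (finitely supported exponent maps on variables (i,j,k)) to F.\<close>
type_synonym 'a Omega = "((nat \<times> nat \<times> nat) \<Rightarrow>\<^sub>0 nat) \<Rightarrow>\<^sub>0 'a"

definition xi :: "nat \<Rightarrow> nat \<Rightarrow> nat \<Rightarrow> 'a::comm_ring_1 Omega" where
  "xi i j k = Poly_Mapping.single (Poly_Mapping.single (i,j,k) 1) 1"

definition mmul :: "nat \<Rightarrow> (nat \<Rightarrow> nat \<Rightarrow> 'b::comm_ring_1) \<Rightarrow> (nat \<Rightarrow> nat \<Rightarrow> 'b) \<Rightarrow> (nat \<Rightarrow> nat \<Rightarrow> 'b)" where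
  "mmul n A C = (\<lambda>i j. \<Sum>l<n. A i l * C l j)"

definition mone :: "nat \<Rightarrow> nat \<Rightarrow> 'b::comm_ring_1" where
  "mone = (\<lambda>i j. if i = j then 1 else 0)"

definition mprod :: "nat \<Rightarrow> (nat \<Rightarrow> nat \<Rightarrow> 'b::comm_ring_1) list \<Rightarrow> (nat \<Rightarrow> nat \<Rightarrow> 'b)" where
  "mprod n As = foldr (mmul n) As mone"

text \<open>D_g-hat = rows i having a (unique) j = g-hat(i) with e_ij in B_g.\<close>
definition Dhat :: "(nat \<Rightarrow> 'g::group_add) \<Rightarrow> (nat \<times> nat) set \<Rightarrow> 'g \<Rightarrow> nat set" where
  "Dhat gs S g = {i. \<exists>j. (i,j) \<in> Bg gs S g}"

definition ghat :: "(nat \<Rightarrow> 'g::group_add) \<Rightarrow> (nat \<times> nat) set \<Rightarrow> 'g \<Rightarrow> nat \<Rightarrow> nat" where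
  "ghat gs S g i = (THE j. (i,j) \<in> Bg gs S g)"

text \<open>Generic element xi_g^(k) = sum over i in D_g-hat of xi_{i,ghat(i)}^(k) e_{i,ghat(i)}
  (it is 0 when g is not in G0, since then D_g-hat is empty).\<close>
definition generic :: "(nat \<Rightarrow> 'g::group_add) \<Rightarrow> (nat \<times> nat) set \<Rightarrow> 'g \<Rightarrow> nat
    \<Rightarrow> (nat \<Rightarrow> nat \<Rightarrow> 'a::comm_ring_1 Omega)" where
  "generic gs S g k = (\<lambda>i j. if i \<in> Dhat gs S g \<and> j = ghat gs S g i then xi i j k else 0)"

text \<open>A monomial m(x_{h_1}^(1),...,x_{h_p}^(p)) is a word w over variable indices;
  its image in F<X|G> and its evaluation on the generic elements.\<close>
definition mono_poly :: "(nat \<Rightarrow> 'g) \<Rightarrow> nat list \<Rightarrow> ('g, 'a::comm_ring_1) fpoly" where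
  "mono_poly h w = fmon (map (\<lambda>k. (h k, k)) w)"

definition mono_eval :: "(nat \<Rightarrow> 'g::group_add) \<Rightarrow> (nat \<times> nat) set \<Rightarrow> nat \<Rightarrow> (nat \<Rightarrow> 'g)
    \<Rightarrow> nat list \<Rightarrow> (nat \<Rightarrow> nat \<Rightarrow> 'a::comm_ring_1 Omega)" where
  "mono_eval gs S n h w = mprod n (map (\<lambda>k. generic gs S (h k) k) w)"

end

theory Submission
  imports Defs "HOL-Library.Multiset"
begin

text \<open>
  Read the matrix units e_pq of B as edges p -> q of a graph, the edge e_pq carrying the
  variable x_{h k}^(k) when e_pq lies in B_{h k}.  Every generic element has at most one
  nonzero entry in each row, so the (i,j) entry of a monomial evaluated at generic elements
  is nonzero exactly when the monomial traces a walk from i to j, and it is then the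
  commutative monomial of the labelled edges of that walk.  Two monomials with the same
  nonzero entry therefore trace walks from i to j with the same multiset of edges.  Such
  walks are connected by two moves, each an instance of a generator of U_0: two closed walks
  at the same vertex commute (degree e), and ABC may be replaced by CBA when A and C lead
  from p to q ~= p and B leads back (degrees g, g^-1, g).  With these moves the first edge
  of one walk is brought to the front of the other, and induction on the length finishes
  the argument.
\<close>

section \<open>Monomials in the free algebra\<close>

lemma fmul_fmon: "fmul (fmon u) (fmon v) = (fmon (u @ v) :: ('g, 'a::comm_semiring_1) fpoly)"
proof
  fix w :: "('g \<times> nat) list"
  have term_eq: "fmon u (take k w) * fmon v (drop k w) = (if k = length u then fmon (u @ v) w else 0 :: 'a)"
    if "k \<le> length w" for k
  proof -
    have split_iff: "take k w = u \<and> drop k w = v \<longleftrightarrow> k = length u \<and> w = u @ v"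
      using that by auto
    have "fmon u (take k w) * fmon v (drop k w) = (if take k w = u \<and> drop k w = v then 1 else 0 :: 'a)"
      by (simp add: fmon_def)
    then show ?thesis
      by (simp only: split_iff) (simp add: fmon_def)
  qed
  have "fmul (fmon u) (fmon v) w = (\<Sum>k\<le>length w. if k = length u then fmon (u @ v) w else 0 :: 'a)"
    unfolding fmul_def by (rule sum.cong[OF refl]) (simp add: term_eq)
  also have "\<dots> = (if length u \<le> length w then fmon (u @ v) w else 0)"
    by simp
  also have "\<dots> = fmon (u @ v) w"
    by (auto simp: fmon_def)
  finally show "fmul (fmon u) (fmon v) w = (fmon (u @ v) w :: 'a)" .
qed

lemma fprod_map_fmon: "fprod (map fmon ws) = (fmon (concat ws) :: ('g, 'a::comm_semiring_1) fpoly)"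
  by (induction ws) (simp_all add: fprod_def fmul_fmon)

lemma fsupp_fmon: "fsupp (fmon u :: ('g, 'a::zero_neq_one) fpoly) = {u}"
  by (auto simp: fsupp_def fmon_def)

lemma fmon_in_free_alg: "u \<noteq> [] \<Longrightarrow> (fmon u :: ('g, 'a::zero_neq_one) fpoly) \<in> free_alg"
  by (simp add: free_alg_def fsupp_fmon) (simp add: fmon_def)

lemma homogeneous_fmon: "homogeneous (wdeg u) (fmon u)"
  by (simp add: homogeneous_def fmon_def)

lemma zero_in_free_alg: "(\<lambda>_. 0) \<in> free_alg"
  by (simp add: free_alg_def fsupp_def)

lemma subst_fdiff_fmon:
  assumes "u \<noteq> v"
  shows "subst \<sigma> (fdiff (fmon u) (fmon v))
    = fdiff (fprod (map \<sigma> u)) (fprod (map \<sigma> v) :: ('g, 'a::comm_ring_1) fpoly)"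
proof -
  have "fsupp (fdiff (fmon u) (fmon v) :: ('g, 'a) fpoly) = {u, v}"
    using assms by (auto simp: fsupp_def fdiff_def fmon_def)
  then show ?thesis
    using assms by (simp add: subst_def fun_eq_iff fdiff_def fmon_def)
qed

section \<open>Congruence of words modulo an ideal\<close>

definition word_congruent ::
    "('g, 'a::comm_ring_1) fpoly set \<Rightarrow> ('g \<times> nat) list \<Rightarrow> ('g \<times> nat) list \<Rightarrow> bool" where
  "word_congruent I u v \<longleftrightarrow> fdiff (fmon u) (fmon v) \<in> I"

context
  fixes I :: "('g, 'a::comm_ring_1) fpoly set"
  assumes ideal: "is_ideal I"
begin

lemma word_congruent_equivp: "equivp (word_congruent I)"
proof (rule equivpI)
  have "fdiff (fmon u) (fmon u) = (\<lambda>_. 0 :: 'a)" for u :: "('g \<times> nat) list"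
    by (simp add: fdiff_def)
  then show "reflp (word_congruent I)"
    using ideal by (simp add: reflp_def word_congruent_def is_ideal_def)
  have "fsmult (-1) (fdiff (fmon u) (fmon v)) = (fdiff (fmon v) (fmon u) :: ('g, 'a) fpoly)" for u v
    by (simp add: fsmult_def fdiff_def fun_eq_iff)
  then show "symp (word_congruent I)"
    using ideal by (metis is_ideal_def sympI word_congruent_def)
  have "fadd (fdiff (fmon u) (fmon v)) (fdiff (fmon v) (fmon w)) = (fdiff (fmon u) (fmon w) :: ('g, 'a) fpoly)"
    for u v w by (simp add: fadd_def fdiff_def fun_eq_iff)
  then show "transp (word_congruent I)"
    using ideal by (metis is_ideal_def transpI word_congruent_def)
qed

lemma word_congruent_append_left:
  assumes "word_congruent I u v"
  shows "word_congruent I (w @ u) (w @ v)"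
proof (cases "w = []")
  case False
  with assms ideal have "fmul (fmon w) (fdiff (fmon u) (fmon v)) \<in> I"
    by (simp add: word_congruent_def is_ideal_def fmon_in_free_alg)
  then show ?thesis
    by (simp add: word_congruent_def fmul_def fdiff_def right_diff_distrib sum_subtractf
        flip: fmul_fmon)
qed (use assms in simp)

lemma word_congruent_append_right:
  assumes "word_congruent I u v"
  shows "word_congruent I (u @ w) (v @ w)"
proof (cases "w = []")
  case False
  with assms ideal have "fmul (fdiff (fmon u) (fmon v)) (fmon w) \<in> I"
    by (simp add: word_congruent_def is_ideal_def fmon_in_free_alg)
  then show ?thesis
    by (simp add: word_congruent_def fmul_def fdiff_def left_diff_distrib sum_subtractf
        flip: fmul_fmon)
qed (use assms in simp)

end

lemma TG_ideal_word_congruent_subst: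
  fixes I :: "('g::group_add, 'a::comm_ring_1) fpoly set"
  assumes TG: "is_TG_ideal I" and uv: "word_congruent I u v"
    and \<tau>: "\<And>x. x \<in> set u \<union> set v \<Longrightarrow> \<tau> x \<noteq> [] \<and> wdeg (\<tau> x) = fst x"
  shows "word_congruent I (concat (map \<tau> u)) (concat (map \<tau> v))"
proof (cases "u = v")
  case True
  then show ?thesis
    by (metis TG is_TG_ideal_def word_congruent_equivp equivp_reflp)
next
  case False
  define \<sigma> :: "'g \<times> nat \<Rightarrow> ('g, 'a) fpoly"
    where "\<sigma> x = (if x \<in> set u \<union> set v then fmon (\<tau> x) else (\<lambda>_. 0))" for x
  have "graded_subst \<sigma>"
    unfolding graded_subst_def
  proof
    fix x
    show "\<sigma> x \<in> free_alg \<and> homogeneous (fst x) (\<sigma> x)"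
      using \<tau>[of x] homogeneous_fmon[of "\<tau> x"]
      by (auto simp: \<sigma>_def fmon_in_free_alg zero_in_free_alg homogeneous_def)
  qed
  with TG uv have "subst \<sigma> (fdiff (fmon u) (fmon v)) \<in> I"
    by (simp add: is_TG_ideal_def word_congruent_def)
  moreover have "map \<sigma> u = map fmon (map \<tau> u)" "map \<sigma> v = map fmon (map \<tau> v)"
    by (simp_all add: \<sigma>_def)
  ultimately show ?thesis
    by (simp only: subst_fdiff_fmon[OF False] fprod_map_fmon word_congruent_def)
qed

section \<open>Rearranging walks\<close>

fun walk :: "'v \<Rightarrow> ('v \<times> 'v \<times> 'k) list \<Rightarrow> 'v \<Rightarrow> bool" where
  "walk i [] j \<longleftrightarrow> i = j"
| "walk i ((p, q, k) # es) j \<longleftrightarrow> p = i \<and> walk q es j"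

lemma walk_append: "walk i (A @ B) j \<longleftrightarrow> (\<exists>x. walk i A x \<and> walk x B j)"
  by (induction i A j rule: walk.induct) auto

lemma walk_split_at_edge:
  assumes "walk i P j" "(p, q, k) \<in> set P"
  obtains P1 P2 where "P = P1 @ (p, q, k) # P2" "walk i P1 p" "walk q P2 j"
proof -
  obtain P1 P2 where P: "P = P1 @ (p, q, k) # P2"
    using assms(2) by (meson split_list)
  with assms(1) obtain x where "walk i P1 x" "walk x ((p, q, k) # P2) j"
    by (auto simp: walk_append)
  with P that show ?thesis
    by simp
qed

lemma walk_enters:
  "walk a es j \<Longrightarrow> a \<notin> V \<Longrightarrow> \<exists>(p, q, k)\<in>set es. p \<in> V
    \<Longrightarrow> \<exists>(p, q, k)\<in>set es. p \<notin> V \<and> q \<in> V"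
  by (induction a es j rule: walk.induct) auto

definition closed_walk_visits :: "'v \<Rightarrow> ('v \<times> 'v \<times> 'k) list \<Rightarrow> 'v \<Rightarrow> bool" where
  "closed_walk_visits i P b \<longleftrightarrow> (\<exists>P1 P2. P = P1 @ P2 \<and> walk i P1 b \<and> walk b P2 i)"

lemma closed_walk_visits_edge:
  assumes "walk i P i" "(p, q, k) \<in> set P"
  shows "closed_walk_visits i P p" "closed_walk_visits i P q"
proof -
  obtain P1 P2 where P: "P = P1 @ (p, q, k) # P2" "walk i P1 p" "walk q P2 i"
    using assms by (rule walk_split_at_edge)
  then show "closed_walk_visits i P p"
    unfolding closed_walk_visits_def by (intro exI[of _ P1] exI[of _ "(p, q, k) # P2"]) auto
  from P show "closed_walk_visits i P q"
    unfolding closed_walk_visits_def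
    by (intro exI[of _ "P1 @ [(p, q, k)]"] exI[of _ P2]) (auto simp: walk_append)
qed

text \<open>
  If R avoided the vertices of P, the walk es, which starts outside them but uses the edges
  of P, would have to enter them along an edge of P or of R; neither is possible.
\<close>

lemma walk_meets_closed_walk:
  assumes P: "walk i P i" "P \<noteq> []" and R: "walk a R j"
    and es: "walk a es j" "mset es = mset (P @ R)"
  obtains Q1 Q2 b where "R = Q1 @ Q2" "walk a Q1 b" "walk b Q2 j" "closed_walk_visits i P b"
proof (rule ccontr)
  note split = that
  assume no_split: "\<not> thesis"
  have target_outside: "\<not> closed_walk_visits i P q" if pqk: "(p, q, k) \<in> set R" for p q k
  proof
    assume q: "closed_walk_visits i P q"
    obtain R1 R2 where R12: "R = R1 @ (p, q, k) # R2" "walk a R1 p" "walk q R2 j"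
      using R pqk by (rule walk_split_at_edge)
    have "thesis"
      by (rule split[of "R1 @ [(p, q, k)]" R2 q]) (use R12 q in \<open>simp_all add: walk_append\<close>)
    with no_split show False ..
  qed
  have a_outside: "\<not> closed_walk_visits i P a"
  proof
    assume "closed_walk_visits i P a"
    then have "thesis"
      using split[of "[]" R a] R by simp
    with no_split show False ..
  qed
  obtain p q k where "(p, q, k) \<in> set P"
    using P(2) by (metis list.set_sel(1) prod_cases3)
  then have "(p, q, k) \<in> set es" "closed_walk_visits i P p"
    using es(2) closed_walk_visits_edge[OF P(1)] by (auto simp flip: set_mset_mset)
  then obtain p q k where e: "(p, q, k) \<in> set es" "\<not> closed_walk_visits i P p" "closed_walk_visits i P q"
    using walk_enters[OF es(1), of "Collect (closed_walk_visits i P)"] a_outside by auto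
  then have "(p, q, k) \<in> set P \<or> (p, q, k) \<in> set R"
    using es(2) by (metis Un_iff set_append set_mset_mset)
  then show False
    using e closed_walk_visits_edge[OF P(1)] target_outside by blast
qed

locale walk_rearrangement =
  fixes E :: "('v \<times> 'v \<times> 'k) set"
    and sim :: "('v \<times> 'v \<times> 'k) list \<Rightarrow> ('v \<times> 'v \<times> 'k) list \<Rightarrow> bool"
  assumes equivp: "equivp sim"
    and append_left: "sim A B \<Longrightarrow> sim (C @ A) (C @ B)"
    and append_right: "sim A B \<Longrightarrow> sim (A @ C) (B @ C)"
    and closed_walks_commute: "walk p A p \<Longrightarrow> walk p B p \<Longrightarrow> A \<noteq> [] \<Longrightarrow> B \<noteq> []
      \<Longrightarrow> set A \<subseteq> E \<Longrightarrow> set B \<subseteq> E \<Longrightarrow> sim (A @ B) (B @ A)"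
    and swap_returning_walks: "walk p A q \<Longrightarrow> walk q B p \<Longrightarrow> walk p C q \<Longrightarrow> p \<noteq> q
      \<Longrightarrow> A \<noteq> [] \<Longrightarrow> B \<noteq> [] \<Longrightarrow> C \<noteq> []
      \<Longrightarrow> set A \<subseteq> E \<Longrightarrow> set B \<subseteq> E \<Longrightarrow> set C \<subseteq> E
      \<Longrightarrow> sim (A @ B @ C) (C @ B @ A)"
begin

lemma move_closed_walk_past:
  assumes P: "walk i P i" "P \<noteq> []" "closed_walk_visits i P b"
    and Q: "walk i Q b" "Q \<noteq> []"
    and E: "set P \<subseteq> E" "set Q \<subseteq> E"
  obtains P' where "sim (P @ Q) (Q @ P')" "walk b P' b" "mset P' = mset P"
proof -
  obtain P1 P2 where P_split: "P = P1 @ P2" "walk i P1 b" "walk b P2 i"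
    using P(3) unfolding closed_walk_visits_def by blast
  show ?thesis
  proof (cases "b = i")
    case True
    with P Q E show ?thesis
      using that[of P] closed_walks_commute by blast
  next
    case False
    with P_split have "P1 \<noteq> []" "P2 \<noteq> []"
      by auto
    with P_split False Q E have "sim (P1 @ P2 @ Q) (Q @ P2 @ P1)"
      using swap_returning_walks[OF P_split(2,3) Q(1)] by auto
    moreover have "walk b (P2 @ P1) b"
      using P_split by (auto simp: walk_append)
    ultimately show ?thesis
      using that[of "P2 @ P1"] P_split by simp
  qed
qed

lemma move_edge_to_front:
  assumes P: "walk i P i" and R: "walk a R j"
    and es: "walk a es j" "mset es = mset (P @ R)"
    and E: "set (P @ (i, a, k) # R) \<subseteq> E"
  obtains R' where "sim (P @ (i, a, k) # R) ((i, a, k) # R')" "walk a R' j" "mset R' = mset es"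
proof (cases "P = []")
  case True
  with R es show ?thesis
    using that[of R] equivp_reflp[OF equivp] by simp
next
  case False
  obtain Q1 Q2 b where R_split: "R = Q1 @ Q2" "walk a Q1 b" "walk b Q2 j"
    and visits: "closed_walk_visits i P b"
    using walk_meets_closed_walk[OF P False R es] .
  obtain P' where P': "sim (P @ (i, a, k) # Q1) ((i, a, k) # Q1 @ P')" "walk b P' b" "mset P' = mset P"
    using move_closed_walk_past[OF P False visits, of "(i, a, k) # Q1"] R_split E by auto
  from append_right[OF P'(1), of Q2]
  have "sim (P @ (i, a, k) # R) ((i, a, k) # Q1 @ P' @ Q2)"
    by (simp add: R_split)
  moreover have "walk a (Q1 @ P' @ Q2) j"
    using R_split P' by (auto simp: walk_append)
  moreover have "mset (Q1 @ P' @ Q2) = mset es"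
    using es(2) R_split P' by simp
  ultimately show ?thesis
    by (rule that)
qed

theorem walks_with_same_edges:
  "walk i es j \<Longrightarrow> walk i fs j \<Longrightarrow> mset es = mset fs \<Longrightarrow> set es \<subseteq> E \<Longrightarrow> sim es fs"
proof (induction es arbitrary: i fs)
  case Nil
  then show ?case
    using equivp_reflp[OF equivp] by simp
next
  case (Cons e es)
  obtain a k where e: "e = (i, a, k)" and es: "walk a es j"
    using Cons.prems(1) by (cases e) auto
  have "e \<in> set fs"
    using Cons.prems(3) by (metis list.set_intros(1) set_mset_mset)
  then obtain P R where fs: "fs = P @ e # R"
    by (meson split_list)
  with Cons.prems(2) e have P: "walk i P i" and R: "walk a R j"
    by (auto simp: walk_append)
  have es_edges: "mset es = mset (P @ R)"
    using Cons.prems(3) fs by simp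
  have "set fs \<subseteq> E"
    using Cons.prems(3,4) by (metis set_mset_mset)
  then obtain R' where fs_sim: "sim fs (e # R')" and R': "walk a R' j" "mset R' = mset es"
    using move_edge_to_front[OF P R es es_edges] fs e by blast
  have "sim es R'"
    using Cons.IH[OF es R'(1)] R'(2) Cons.prems(4) by simp
  then have "sim (e # es) (e # R')"
    using append_left[of es R' "[e]"] by simp
  then show ?case
    using fs_sim equivp_symp[OF equivp] equivp_transp[OF equivp] by blast
qed

end

section \<open>Walks of matrix units\<close>

definition edge_monomial :: "'e list \<Rightarrow> 'e \<Rightarrow>\<^sub>0 nat" where
  "edge_monomial es = sum_list (map (\<lambda>e. Poly_Mapping.single e 1) es)"

lemma lookup_edge_monomial: "Poly_Mapping.lookup (edge_monomial es) e = count (mset es) e"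
  by (induction es) (simp_all add: edge_monomial_def lookup_add lookup_single when_def)

lemma edge_monomial_eq_iff: "edge_monomial es = edge_monomial fs \<longleftrightarrow> mset es = mset fs"
  by (metis lookup_edge_monomial multiset_eqI poly_mapping_eqI)

locale matrix_units =
  fixes n :: nat and gs :: "nat \<Rightarrow> 'g::group_add" and S :: "(nat \<times> nat) set"
    and h :: "nat \<Rightarrow> 'g"
  assumes inj: "inj_on gs {0..<n}"
    and S_square: "S \<subseteq> {0..<n} \<times> {0..<n}"
    and S_trans: "(i, j) \<in> S \<Longrightarrow> (j, k) \<in> S \<Longrightarrow> (i, k) \<in> S"
begin

definition unit_edges :: "(nat \<times> nat \<times> nat) set" where
  "unit_edges = {(p, q, k). (p, q) \<in> Bg gs S (h k)}"

definition edge_word :: "(nat \<times> nat \<times> nat) list \<Rightarrow> ('g \<times> nat) list" where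
  "edge_word es = map (\<lambda>(p, q, k). (h k, k)) es"

lemma edge_word_append [simp]: "edge_word (A @ B) = edge_word A @ edge_word B"
  by (simp add: edge_word_def)

lemma edge_word_eq_Nil_iff [simp]: "edge_word A = [] \<longleftrightarrow> A = []"
  by (simp add: edge_word_def)

lemma wdeg_edge_word: "walk p A q \<Longrightarrow> set A \<subseteq> unit_edges \<Longrightarrow> wdeg (edge_word A) = - gs p + gs q"
proof (induction p A q rule: walk.induct)
  case (1 i j)
  then show ?case
    by (simp add: wdeg_def edge_word_def)
next
  case (2 i p q k es j)
  then have "h k = - gs i + gs q"
    by (simp add: unit_edges_def Bg_def)
  with 2 show ?case
    by (simp add: wdeg_def edge_word_def add.assoc)
qed

lemma walk_in_S: "walk p A q \<Longrightarrow> set A \<subseteq> unit_edges \<Longrightarrow> A \<noteq> [] \<Longrightarrow> (p, q) \<in> S"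
proof (induction p A q rule: walk.induct)
  case (2 i p q k es j)
  then have "(i, q) \<in> S"
    by (simp add: unit_edges_def Bg_def)
  with 2 show ?case
    by (cases "es = []") (auto intro: S_trans)
qed simp

context
  fixes I :: "('g, 'a::comm_ring_1) fpoly set"
  assumes TG: "is_TG_ideal I" and gens: "U0_gens gs S \<subseteq> I"
begin

lemma edge_words_closed_walks_commute:
  assumes "walk p A p" "walk p B p" "A \<noteq> []" "B \<noteq> []" "set A \<subseteq> unit_edges" "set B \<subseteq> unit_edges"
  shows "word_congruent I (edge_word (A @ B)) (edge_word (B @ A))"
proof -
  have "(p, p) \<in> Bg gs S 0"
    using walk_in_S[OF assms(1,5,3)] by (simp add: Bg_def)
  then have "fdiff (fmon [(0, 1), (0, 2)]) (fmon [(0, 2), (0, 1)]) \<in> U0_gens gs S"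
    unfolding U0_gens_def G0_def by blast
  then have gen: "word_congruent I [(0, 1), (0, 2)] [(0, 2), (0, 1)]"
    using gens by (auto simp: word_congruent_def)
  define \<tau> :: "'g \<times> nat \<Rightarrow> ('g \<times> nat) list"
    where "\<tau> x = (if snd x = 1 then edge_word A else edge_word B)" for x
  have "\<tau> x \<noteq> [] \<and> wdeg (\<tau> x) = fst x" if "x \<in> {(0, 1), (0, 2)}" for x
    using that assms by (auto simp: \<tau>_def wdeg_edge_word)
  then have "word_congruent I (concat (map \<tau> [(0, 1), (0, 2)])) (concat (map \<tau> [(0, 2), (0, 1)]))"
    by (intro TG_ideal_word_congruent_subst[OF TG gen]) auto
  then show ?thesis
    by (simp add: \<tau>_def)
qed

lemma edge_words_swap_returning_walks:
  assumes "walk p A q" "walk q B p" "walk p C q" "p \<noteq> q" "A \<noteq> []" "B \<noteq> []" "C \<noteq> []"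
    and "set A \<subseteq> unit_edges" "set B \<subseteq> unit_edges" "set C \<subseteq> unit_edges"
  shows "word_congruent I (edge_word (A @ B @ C)) (edge_word (C @ B @ A))"
proof -
  define g where "g = - gs p + gs q"
  have "(p, q) \<in> S"
    using walk_in_S[OF assms(1,8,5)] .
  then have "(p, q) \<in> Bg gs S g" "p < n" "q < n"
    using S_square by (auto simp: Bg_def g_def)
  moreover have "gs p \<noteq> gs q"
    using inj assms(4) \<open>p < n\<close> \<open>q < n\<close> by (auto simp: inj_on_def)
  then have "g \<noteq> 0"
    unfolding g_def by (metis add_minus_cancel add.right_neutral)
  ultimately have "fdiff (fmon [(g, 1), (- g, 2), (g, 3)]) (fmon [(g, 3), (- g, 2), (g, 1)])
      \<in> U0_gens gs S"
    unfolding U0_gens_def G0_def by blast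
  then have gen: "word_congruent I [(g, 1), (- g, 2), (g, 3)] [(g, 3), (- g, 2), (g, 1)]"
    using gens by (auto simp: word_congruent_def)
  define \<tau> :: "'g \<times> nat \<Rightarrow> ('g \<times> nat) list" where
    "\<tau> x = (if snd x = 1 then edge_word A else if snd x = 2 then edge_word B else edge_word C)" for x
  have "\<tau> x \<noteq> [] \<and> wdeg (\<tau> x) = fst x" if "x \<in> {(g, 1), (- g, 2), (g, 3)}" for x
    using that assms by (auto simp: \<tau>_def wdeg_edge_word g_def minus_add)
  then have "word_congruent I (concat (map \<tau> [(g, 1), (- g, 2), (g, 3)]))
      (concat (map \<tau> [(g, 3), (- g, 2), (g, 1)]))"
    by (intro TG_ideal_word_congruent_subst[OF TG gen]) auto
  then show ?thesis
    by (simp add: \<tau>_def)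
qed

lemma walk_rearrangement_edge_words:
  "walk_rearrangement unit_edges (\<lambda>A B. word_congruent I (edge_word A) (edge_word B))"
proof -
  have ideal: "is_ideal I"
    using TG by (simp add: is_TG_ideal_def)
  show ?thesis
  proof
    show "equivp (\<lambda>A B. word_congruent I (edge_word A) (edge_word B))"
      using word_congruent_equivp[OF ideal] by (simp add: equivp_def) metis
  qed (use word_congruent_append_left[OF ideal] word_congruent_append_right[OF ideal]
      edge_words_closed_walks_commute edge_words_swap_returning_walks in simp_all)
qed

end

lemma ghat_eqI: "(i, j) \<in> Bg gs S g \<Longrightarrow> ghat gs S g i = j"
  unfolding ghat_def
proof (rule the_equality)
  fix j'
  assume "(i, j) \<in> Bg gs S g" "(i, j') \<in> Bg gs S g"
  then have "gs j' = gs j" "j < n" "j' < n"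
    using S_square by (auto simp: Bg_def)
  with inj show "j' = j"
    by (auto simp: inj_on_def)
qed

lemma Dhat_iff: "i \<in> Dhat gs S (h k) \<longleftrightarrow> (i, ghat gs S (h k) i, k) \<in> unit_edges"
  by (auto simp: Dhat_def unit_edges_def ghat_eqI)

fun trace :: "nat \<Rightarrow> nat list \<Rightarrow> (nat \<times> nat \<times> nat) list" where
  "trace i [] = []"
| "trace i (k # u) = (i, ghat gs S (h k) i, k) # trace (ghat gs S (h k) i) u"

lemma edge_word_trace: "edge_word (trace i u) = map (\<lambda>k. (h k, k)) u"
  by (induction u arbitrary: i) (simp_all add: edge_word_def)

lemma mono_eval_Cons:
  assumes q: "q = ghat gs S (h k) i"
  shows "(mono_eval gs S n h (k # u) i j :: 'a::comm_ring_1 Omega) =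
    (if (i, q, k) \<in> unit_edges then xi i q k * mono_eval gs S n h u q j else 0)"
proof -
  have "(i, q, k) \<in> unit_edges \<Longrightarrow> q < n"
    using S_square by (auto simp: unit_edges_def Bg_def)
  then have "(\<Sum>l<n. generic gs S (h k) k i l * (mono_eval gs S n h u l j :: 'a Omega)) =
      (if (i, q, k) \<in> unit_edges then xi i q k * mono_eval gs S n h u q j else 0)"
    by (simp add: generic_def Dhat_iff q if_distrib[of "\<lambda>x. x * _"] sum.If_cases)
  then show ?thesis
    by (simp add: mono_eval_def mprod_def mmul_def)
qed

lemma mono_eval_trace:
  "(mono_eval gs S n h u i j :: 'a::comm_ring_1 Omega) =
    (if set (trace i u) \<subseteq> unit_edges \<and> walk i (trace i u) j
     then Poly_Mapping.single (edge_monomial (trace i u)) 1 else 0)"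
proof (induction u arbitrary: i)
  case Nil
  then show ?case
    by (simp add: mono_eval_def mprod_def mone_def edge_monomial_def)
next
  case (Cons k u)
  then show ?case
    by (simp add: mono_eval_Cons xi_def mult_single edge_monomial_def)
qed

lemma mono_eval_nonzero:
  assumes "(mono_eval gs S n h u i j :: 'a::comm_ring_1 Omega) \<noteq> 0"
  shows "set (trace i u) \<subseteq> unit_edges" "walk i (trace i u) j"
  using assms by (simp_all add: mono_eval_trace split: if_splits)

lemma mono_eval_same_entry:
  assumes eq: "(mono_eval gs S n h u i j :: 'a::comm_ring_1 Omega) = mono_eval gs S n h v i j"
    and u: "set (trace i u) \<subseteq> unit_edges" "walk i (trace i u) j"
  shows "walk i (trace i v) j" "mset (trace i u) = mset (trace i v)"
proof -
  have single_nonzero: "Poly_Mapping.single x (1 :: 'a) \<noteq> 0" for x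
    by (metis lookup_single_eq lookup_zero zero_neq_one)
  from eq u have v: "set (trace i v) \<subseteq> unit_edges" "walk i (trace i v) j"
    by (simp_all add: mono_eval_trace single_nonzero split: if_splits)
  then show "walk i (trace i v) j"
    by simp
  from eq u v have "Poly_Mapping.single (edge_monomial (trace i u)) (1 :: 'a)
      = Poly_Mapping.single (edge_monomial (trace i v)) 1"
    by (simp add: mono_eval_trace)
  then have "edge_monomial (trace i u) = edge_monomial (trace i v)"
    by (metis lookup_single_eq lookup_single_not_eq zero_neq_one)
  then show "mset (trace i u) = mset (trace i v)"
    by (simp add: edge_monomial_eq_iff)
qed

end

text \<open>
  In
  the last hypothesis the conjunct "\<noteq> 0" is a separate occurrence of mono_eval whose
  coefficient type is independent of 'a; it is used only through mono_eval_nonzero, which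
  holds over every coefficient ring.
\<close>

theorem mainTheorem4:
  fixes n :: nat and gs :: "nat \<Rightarrow> 'g::group_add" and S :: "(nat \<times> nat) set"
    and h :: "nat \<Rightarrow> 'g" and m w :: "nat list"
  assumes "infinite (UNIV :: 'a::field set)"
    and "inj_on gs {0..<n}"
    and "S \<subseteq> {0..<n} \<times> {0..<n}"
    and "\<And>i j k. (i,j) \<in> S \<Longrightarrow> (j,k) \<in> S \<Longrightarrow> (i,k) \<in> S"
    and "\<exists>i<n. \<exists>j<n. (mono_eval gs S n h m i j :: 'a Omega) = mono_eval gs S n h w i j
                     \<and> mono_eval gs S n h m i j \<noteq> 0"
  shows "fdiff (mono_poly h m) (mono_poly h w) \<in> (U0 gs S :: ('g, 'a) fpoly set)"
proof -
  interpret matrix_units n gs S h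
    using assms(2-4) by unfold_locales
  obtain i j where entry: "(mono_eval gs S n h m i j :: 'a Omega) = mono_eval gs S n h w i j"
    and m_walk: "set (trace i m) \<subseteq> unit_edges" "walk i (trace i m) j"
    using assms(5) mono_eval_nonzero by blast
  have "word_congruent I (edge_word (trace i m)) (edge_word (trace i w))"
    if "is_TG_ideal I" "U0_gens gs S \<subseteq> I" for I :: "('g, 'a) fpoly set"
    using walk_rearrangement.walks_with_same_edges[OF walk_rearrangement_edge_words[OF that]]
      mono_eval_same_entry[OF entry m_walk] m_walk by blast
  then show ?thesis
    by (auto simp: U0_def TG_ideal_gen_def word_congruent_def edge_word_trace mono_poly_def)
qed

end
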